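(* Let $\mathscr{X}$ be a totally bounded normed metric space with $\|x\|\le1$ for all $x$, consider the $\epsilon$-perturbation channel on $\mathscr{X}$ described in the context, let $0<\epsilon\le1$ and $0\le\delta<m_{\mathscr{Y}}(V_\epsilon)$. Then $$C^\delta_\epsilon=\sup\Big\{ I_{\tilde\delta/|[\![X]\!]|}(Y;X)\ :\ X \text{ a transmitted UV with } [\![X]\!]\subseteq\mathscr{X},\ 0\le\tilde\delta\le \delta/m_{\mathscr{Y}}([\![Y]\!])\Big\}\ \text{bits},$$ where $Y$ is the received UV corresponding to $X$.
   Context: Uncertain variables (UVs): a UV is a map $U$ from a sample space $\Omega$ to a set; jointly considered UVs share $\Omega$. $[\![U]\!]=\{U(\omega)\}$; $[\![U|w]\!]=\{U(\omega):W(\omega)=w\}$, $[\![U|W]\!]=\{[\![U|w]\!]:w\in[\![W]\!]\}$. An uncertainty function on a set $\mathscr{U}$ is a map $m$ on subsets of $\mathscr{U}$ with $m(\emptyset)=0$, $0<m(S)<\infty$ for nonempty $S$, $\max\{m(S_1),m(S_2)\}\le m(S_1\cup S_2)$. $\delta$-mutual information: for UVs $U$ (values in $\mathscr{U}$ with uncertainty function $m_{\mathscr{U}}$) and $W$, points $u,u'\in[\![U]\!]$ are $\delta$-connected via $[\![U|W]\!]$ if there are $w_1,\dots,w_N\in[\![W]\!]$ with $u\in[\![U|w_1]\!]$, $u'\in[\![U|w_N]\!]$, $m_{\mathscr{U}}([\![U|w_i]\!]\cap[\![U|w_{i-1}]\!])/m_{\mathscr{U}}([\![U]\!])>\delta$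 for $1<i\le N$; a set is $\delta$-connected if all pairs of its points are. A $\delta$-overlap family $[\![U|W]\!]^*_\delta$ is a family of distinct subsets covering $[\![U]\!]$, of largest cardinality among covering families such that (i) each member is $\delta$-connected and contains some $[\![U|w]\!]$; (ii) distinct members $S_1,S_2$ satisfy $m_{\mathscr{U}}(S_1\cap S_2)\le\delta\, m_{\mathscr{U}}([\![U]\!])$; (iii) each $[\![U|w]\!]$ lies in some member. $I_\delta(U;W)=\log_2|[\![U|W]\!]^*_\delta|$ if such a family exists, else $0$. Channel: the output space is $\mathscr{Y}=\mathscr{X}$; $m_{\mathscr{X}},m_{\mathscr{Y}}$ are uncertainty functions on $\mathscr{X},\mathscr{Y}$ with $m_{\mathscr{Y}}(\mathscr{Y})=1$. $S_\epsilon(x)=\{y\in\mathscr{Y}:\|x-y\|\le\epsilon\}$; $V_\epsilon=S_\epsilon(x^* )$ where $x^*$ minimizes $m_{\mathscr{Y}}(S_\epsilon(x))$ over $x\in\mathscr{X}$. A codebook is a discrete set $\mathcal{C}\subseteq\mathscr{X}$. $e_\epsilon(x_1,x_2)=m_{\mathscr{Y}}(S_\epsilon(x_1)\cap S_\epsilon(x_2))/m_{\mathscr{Y}}(\mathscr{Y})$. $\mathcal{C}$ is $(\epsilon,\delta)$-distinguishable if $e_\epsilon(x_1,x_2)\le\delta/|\mathcal{C}|$ for all distinct $x_1,x_2\in\mathcal{C}$; $C^\delta_\epsilon=\sup\log_2|\mathcal{C}|$ over $(\epsilon,\delta)$-distinguishable codebooks. For a codebook $\mathcal{C}$, the transmitted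 UV $X$ and received UV $Y$ satisfy $[\![X]\!]=\mathcal{C}$, $[\![Y]\!]=\bigcup_{x\in\mathcal{C}}S_\epsilon(x)$, $[\![Y|x]\!]=\{y\in[\![Y]\!]:\|x-y\|\le\epsilon\}$, $[\![X|y]\!]=\{x\in[\![X]\!]:\|x-y\|\le\epsilon\}$. *)

theory Defs
  imports "HOL-Analysis.Analysis"
begin

definition uncertainty_function :: "'u set \<Rightarrow> ('u set \<Rightarrow> real) \<Rightarrow> bool" where
  "uncertainty_function A m \<longleftrightarrow>
     m {} = 0 \<and> (\<forall>S. S \<subseteq> A \<longrightarrow> S \<noteq> {} \<longrightarrow> 0 < m S) \<and>
     (\<forall>S1 S2. S1 \<subseteq> A \<longrightarrow> S2 \<subseteq> A \<longrightarrow> max (m S1) (m S2) \<le> m (S1 \<union> S2))"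

text \<open>The delta-mutual information I_delta(U;W) depends on U and W only through
  UU = [[U]], the index set WW = [[W]] and cond w = [[U|w]].\<close>
definition delta_connected_pts ::
  "('u set \<Rightarrow> real) \<Rightarrow> 'u set \<Rightarrow> 'w set \<Rightarrow> ('w \<Rightarrow> 'u set) \<Rightarrow> real \<Rightarrow> 'u \<Rightarrow> 'u \<Rightarrow> bool" where
  "delta_connected_pts m UU WW cond \<delta> u u' \<longleftrightarrow>
     u \<in> UU \<and> u' \<in> UU \<and>
     (\<exists>ws. ws \<noteq> [] \<and> set ws \<subseteq> WW \<and> u \<in> cond (hd ws) \<and> u' \<in> cond (last ws) \<and>
        (\<forall>i. 0 < i \<and> i < length ws \<longrightarrow>
            m (cond (ws ! i) \<inter> cond (ws ! (i - 1))) / m UU > \<delta>))"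

definition delta_connected_set ::
  "('u set \<Rightarrow> real) \<Rightarrow> 'u set \<Rightarrow> 'w set \<Rightarrow> ('w \<Rightarrow> 'u set) \<Rightarrow> real \<Rightarrow> 'u set \<Rightarrow> bool" where
  "delta_connected_set m UU WW cond \<delta> S \<longleftrightarrow>
     (\<forall>u\<in>S. \<forall>u'\<in>S. delta_connected_pts m UU WW cond \<delta> u u')"

definition admissible_family ::
  "('u set \<Rightarrow> real) \<Rightarrow> 'u set \<Rightarrow> 'w set \<Rightarrow> ('w \<Rightarrow> 'u set) \<Rightarrow> real \<Rightarrow> 'u set set \<Rightarrow> bool" where
  "admissible_family m UU WW cond \<delta> F \<longleftrightarrow>
     (\<forall>S\<in>F. S \<subseteq> UU) \<and> \<Union>F = UU \<and>
     (\<forall>S\<in>F. delta_connected_set m UU WW cond \<delta> S \<and> (\<exists>w\<in>WW. cond w \<subseteq> S)) \<and>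
     (\<forall>S1\<in>F. \<forall>S2\<in>F. S1 \<noteq> S2 \<longrightarrow> m (S1 \<inter> S2) \<le> \<delta> * m UU) \<and>
     (\<forall>w\<in>WW. \<exists>S\<in>F. cond w \<subseteq> S)"

definition overlap_family ::
  "('u set \<Rightarrow> real) \<Rightarrow> 'u set \<Rightarrow> 'w set \<Rightarrow> ('w \<Rightarrow> 'u set) \<Rightarrow> real \<Rightarrow> 'u set set \<Rightarrow> bool" where
  "overlap_family m UU WW cond \<delta> F \<longleftrightarrow>
     admissible_family m UU WW cond \<delta> F \<and> finite F \<and>
     (\<forall>G. admissible_family m UU WW cond \<delta> G \<longrightarrow> finite G \<and> card G \<le> card F)"

definition I_delta ::
  "('u set \<Rightarrow> real) \<Rightarrow> 'u set \<Rightarrow> 'w set \<Rightarrow> ('w \<Rightarrow> 'u set) \<Rightarrow> real \<Rightarrow> real" where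
  "I_delta m UU WW cond \<delta> =
     (if \<exists>F. overlap_family m UU WW cond \<delta> F
      then log 2 (real (card (SOME F. overlap_family m UU WW cond \<delta> F))) else 0)"

definition S_eps :: "'a::real_normed_vector set \<Rightarrow> real \<Rightarrow> 'a \<Rightarrow> 'a set" where
  "S_eps XX \<epsilon> x = {y \<in> XX. norm (x - y) \<le> \<epsilon>}"

definition e_eps :: "'a::real_normed_vector set \<Rightarrow> ('a set \<Rightarrow> real) \<Rightarrow> real \<Rightarrow> 'a \<Rightarrow> 'a \<Rightarrow> real" where
  "e_eps XX mY \<epsilon> x1 x2 = mY (S_eps XX \<epsilon> x1 \<inter> S_eps XX \<epsilon> x2) / mY XX"

definition codebook :: "'a set \<Rightarrow> 'a set \<Rightarrow> bool" where
  "codebook XX C \<longleftrightarrow> C \<subseteq> XX \<and> finite C \<and> C \<noteq> {}"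

definition distinguishable ::
  "'a::real_normed_vector set \<Rightarrow> ('a set \<Rightarrow> real) \<Rightarrow> real \<Rightarrow> real \<Rightarrow> 'a set \<Rightarrow> bool" where
  "distinguishable XX mY \<epsilon> \<delta> C \<longleftrightarrow>
     (\<forall>x1\<in>C. \<forall>x2\<in>C. x1 \<noteq> x2 \<longrightarrow> e_eps XX mY \<epsilon> x1 x2 \<le> \<delta> / real (card C))"

definition capacity ::
  "'a::real_normed_vector set \<Rightarrow> ('a set \<Rightarrow> real) \<Rightarrow> real \<Rightarrow> real \<Rightarrow> ereal" where
  "capacity XX mY \<epsilon> \<delta> =
     Sup {ereal (log 2 (real (card C))) | C. codebook XX C \<and> distinguishable XX mY \<epsilon> \<delta> C}"

text \<open>Received UV for codebook C: [[Y]] and [[Y|x]].\<close>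
definition Y_range :: "'a::real_normed_vector set \<Rightarrow> real \<Rightarrow> 'a set \<Rightarrow> 'a set" where
  "Y_range XX \<epsilon> C = (\<Union>x\<in>C. S_eps XX \<epsilon> x)"

definition Y_cond :: "'a::real_normed_vector set \<Rightarrow> real \<Rightarrow> 'a set \<Rightarrow> 'a \<Rightarrow> 'a set" where
  "Y_cond XX \<epsilon> C x = {y \<in> Y_range XX \<epsilon> C. norm (x - y) \<le> \<epsilon>}"

end

theory Submission
  imports Defs
begin

text \<open>Since every ball has uncertainty larger than \<open>\<delta>\<close>, while distinct members of an admissible
  family overlap by at most \<open>\<delta>\<close>, each member of an admissible family contains the ball around
  its own codeword; these codewords form a distinguishable codebook of the same size. Conversely,
  the balls around a distinguishable codebook form an admissible family, which is then of maximal
  size, so the \<open>\<delta>\<close>-mutual information equals the logarithm of the codebook size.\<close>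

lemma uncertainty_function_mono:
  assumes "uncertainty_function XX m" "A \<subseteq> B" "B \<subseteq> XX"
  shows "m A \<le> m B"
proof -
  have "A \<subseteq> XX" using assms(2,3) by (rule subset_trans)
  then have "max (m A) (m B) \<le> m (A \<union> B)"
    using assms(1,3) unfolding uncertainty_function_def by blast
  with \<open>A \<subseteq> B\<close> show ?thesis by (simp add: sup_absorb2)
qed

lemma uncertainty_function_pos:
  "uncertainty_function XX m \<Longrightarrow> S \<subseteq> XX \<Longrightarrow> S \<noteq> {} \<Longrightarrow> 0 < m S"
  by (simp add: uncertainty_function_def)

lemma Y_range_subset: "Y_range XX \<epsilon> C \<subseteq> XX"
  unfolding Y_range_def S_eps_def by blast

lemma Y_cond_eq_S_eps: "x \<in> C \<Longrightarrow> Y_cond XX \<epsilon> C x = S_eps XX \<epsilon> x"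
  unfolding Y_cond_def Y_range_def S_eps_def by blast

lemma Y_range_nonempty:
  assumes "codebook XX C" "0 \<le> \<epsilon>"
  shows "Y_range XX \<epsilon> C \<noteq> {}"
proof -
  obtain x where "x \<in> C" "x \<in> XX" using assms(1) unfolding codebook_def by blast
  then have "x \<in> S_eps XX \<epsilon> x" using assms(2) by (simp add: S_eps_def)
  with \<open>x \<in> C\<close> show ?thesis unfolding Y_range_def by blast
qed

lemma Y_range_pos:
  assumes "uncertainty_function XX mY" "codebook XX C" "0 \<le> \<epsilon>"
  shows "0 < mY (Y_range XX \<epsilon> C)"
  using assms(1) Y_range_subset Y_range_nonempty[OF assms(2,3)]
  by (rule uncertainty_function_pos)

lemma admissible_family_overlap_le:
  assumes uf: "uncertainty_function XX m" and UU: "UU \<subseteq> XX"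
    and adm: "admissible_family m UU WW cond \<eta> F"
    and S: "S1 \<in> F" "S2 \<in> F" "S1 \<noteq> S2" and A: "A \<subseteq> S1 \<inter> S2"
  shows "m A \<le> \<eta> * m UU"
proof -
  have sub: "\<forall>S\<in>F. S \<subseteq> UU"
    and overlap: "\<forall>S1\<in>F. \<forall>S2\<in>F. S1 \<noteq> S2 \<longrightarrow> m (S1 \<inter> S2) \<le> \<eta> * m UU"
    using adm by (simp_all add: admissible_family_def)
  have "S1 \<inter> S2 \<subseteq> XX" using sub S(1) UU by blast
  with A have "m A \<le> m (S1 \<inter> S2)" by (rule uncertainty_function_mono[OF uf])
  also have "\<dots> \<le> \<eta> * m UU" using overlap S by blast
  finally show ?thesis .
qed

lemma admissible_family_centres:
  fixes XX :: "'a::real_normed_vector set"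
  assumes uf: "uncertainty_function XX mY"
    and heavy: "\<forall>x\<in>C. \<kappa> < mY (S_eps XX \<epsilon> x)"
    and adm: "admissible_family mY (Y_range XX \<epsilon> C) C (Y_cond XX \<epsilon> C) \<eta> G"
    and small: "\<eta> * mY (Y_range XX \<epsilon> C) \<le> \<kappa>"
  obtains f where "inj_on f G" "f ` G \<subseteq> C" "\<forall>S\<in>G. S_eps XX \<epsilon> (f S) \<subseteq> S"
proof -
  have "\<exists>w\<in>C. S_eps XX \<epsilon> w \<subseteq> S" if "S \<in> G" for S
  proof -
    have "\<forall>S\<in>G. \<exists>w\<in>C. Y_cond XX \<epsilon> C w \<subseteq> S" using adm by (simp add: admissible_family_def)
    then obtain w where "w \<in> C" "Y_cond XX \<epsilon> C w \<subseteq> S" using \<open>S \<in> G\<close> by blast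
    then show ?thesis using Y_cond_eq_S_eps by metis
  qed
  then obtain f where f: "\<forall>S\<in>G. f S \<in> C \<and> S_eps XX \<epsilon> (f S) \<subseteq> S" by metis
  have "inj_on f G"
  proof (rule inj_onI, rule ccontr)
    fix S1 S2 assume S: "S1 \<in> G" "S2 \<in> G" "f S1 = f S2" "S1 \<noteq> S2"
    have "S_eps XX \<epsilon> (f S1) \<subseteq> S1" "S_eps XX \<epsilon> (f S2) \<subseteq> S2" using f S(1,2) by auto
    then have "S_eps XX \<epsilon> (f S1) \<subseteq> S1 \<inter> S2" using S(3) by simp
    then have "mY (S_eps XX \<epsilon> (f S1)) \<le> \<eta> * mY (Y_range XX \<epsilon> C)"
      using admissible_family_overlap_le[OF uf Y_range_subset adm S(1,2,4)] by blast
    also have "\<dots> \<le> \<kappa>" by (rule small)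
    also have "\<dots> < mY (S_eps XX \<epsilon> (f S1))" using heavy f S by blast
    finally show False by simp
  qed
  with f show thesis using that by blast
qed

lemma admissible_family_codebook:
  fixes XX :: "'a::real_normed_vector set"
  assumes uf: "uncertainty_function XX mY" and mYX: "mY XX = 1" and "0 \<le> \<epsilon>"
    and C: "codebook XX C"
    and heavy: "\<forall>x\<in>C. \<delta> < mY (S_eps XX \<epsilon> x)" and "0 \<le> \<delta>"
    and adm: "admissible_family mY (Y_range XX \<epsilon> C) C (Y_cond XX \<epsilon> C) \<eta> G"
    and small: "\<eta> * mY (Y_range XX \<epsilon> C) \<le> \<delta> / card C"
  shows "finite G \<and> card G \<le> card C \<and>
    (\<exists>C'. codebook XX C' \<and> distinguishable XX mY \<epsilon> \<delta> C' \<and> card C' = card G)"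
proof -
  have finC: "finite C" and "card C \<ge> 1"
    using C unfolding codebook_def by (auto simp: Suc_le_eq card_gt_0_iff)
  then have "\<delta> / card C \<le> \<delta>" using \<open>0 \<le> \<delta>\<close> by (simp add: divide_le_eq mult_le_cancel_left1)
  with heavy have "\<forall>x\<in>C. \<delta> / card C < mY (S_eps XX \<epsilon> x)" by fastforce
  then obtain f where f: "inj_on f G" "f ` G \<subseteq> C" "\<forall>S\<in>G. S_eps XX \<epsilon> (f S) \<subseteq> S"
    by (rule admissible_family_centres[OF uf _ adm small])
  have finG: "finite G" by (rule finite_imageD[OF finite_subset[OF f(2) finC] f(1)])
  have cardG: "card G \<le> card C" by (rule card_inj_on_le[OF f(1,2) finC])
  have "\<Union>G = Y_range XX \<epsilon> C" using adm by (simp add: admissible_family_def)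
  with Y_range_nonempty[OF C \<open>0 \<le> \<epsilon>\<close>] have "G \<noteq> {}" by auto
  then have "0 < card G" using finG by (simp add: card_gt_0_iff)
  have codebook: "codebook XX (f ` G)"
    using f C finG \<open>G \<noteq> {}\<close> unfolding codebook_def by auto
  have card_img: "card (f ` G) = card G" using f card_image by blast
  have "distinguishable XX mY \<epsilon> \<delta> (f ` G)"
    unfolding distinguishable_def
  proof (intro ballI impI)
    fix x1 x2 assume x: "x1 \<in> f ` G" "x2 \<in> f ` G" "x1 \<noteq> x2"
    then obtain S1 S2 where S: "S1 \<in> G" "S2 \<in> G" "x1 = f S1" "x2 = f S2" "S1 \<noteq> S2" by blast
    have "S_eps XX \<epsilon> x1 \<inter> S_eps XX \<epsilon> x2 \<subseteq> S1 \<inter> S2" using f S by blast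
    then have "mY (S_eps XX \<epsilon> x1 \<inter> S_eps XX \<epsilon> x2) \<le> \<eta> * mY (Y_range XX \<epsilon> C)"
      using admissible_family_overlap_le[OF uf Y_range_subset adm S(1,2,5)] by blast
    also have "\<dots> \<le> \<delta> / card C" by (rule small)
    also have "\<dots> \<le> \<delta> / card (f ` G)"
      using card_img cardG \<open>0 < card G\<close> \<open>0 \<le> \<delta>\<close> by (simp add: frac_le)
    finally show "e_eps XX mY \<epsilon> x1 x2 \<le> \<delta> / card (f ` G)"
      unfolding e_eps_def mYX by simp
  qed
  with finG cardG codebook card_img show ?thesis by blast
qed

lemma distinguishable_balls_admissible:
  fixes XX :: "'a::real_normed_vector set"
  assumes uf: "uncertainty_function XX mY" and mYX: "mY XX = 1" and "0 \<le> \<epsilon>"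
    and C: "codebook XX C" and dist: "distinguishable XX mY \<epsilon> \<delta> C"
  shows "admissible_family mY (Y_range XX \<epsilon> C) C (Y_cond XX \<epsilon> C)
           (\<delta> / mY (Y_range XX \<epsilon> C) / card C) (S_eps XX \<epsilon> ` C)"
  unfolding admissible_family_def
proof (intro conjI ballI impI)
  let ?UU = "Y_range XX \<epsilon> C"
  let ?\<eta> = "\<delta> / mY ?UU / card C"
  show "S \<subseteq> ?UU" if "S \<in> S_eps XX \<epsilon> ` C" for S using that unfolding Y_range_def by blast
  show "\<Union> (S_eps XX \<epsilon> ` C) = ?UU" unfolding Y_range_def by simp
  show "\<exists>w\<in>C. Y_cond XX \<epsilon> C w \<subseteq> S" if "S \<in> S_eps XX \<epsilon> ` C" for S
    using that Y_cond_eq_S_eps by fastforce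
  show "\<exists>S\<in>S_eps XX \<epsilon> ` C. Y_cond XX \<epsilon> C w \<subseteq> S" if "w \<in> C" for w
    using that Y_cond_eq_S_eps by blast
  show "delta_connected_set mY ?UU C (Y_cond XX \<epsilon> C) ?\<eta> S" if "S \<in> S_eps XX \<epsilon> ` C" for S
  proof -
    obtain x where x: "x \<in> C" "S = S_eps XX \<epsilon> x" using \<open>S \<in> S_eps XX \<epsilon> ` C\<close> by blast
    \<comment> \<open>Any two points of a ball are joined by the chain \<open>[x]\<close>, whose overlap condition is vacuous.\<close>
    show ?thesis
      unfolding delta_connected_set_def delta_connected_pts_def
      by (intro ballI conjI exI[of _ "[x]"])
        (use x Y_cond_eq_S_eps[OF x(1)] in \<open>auto simp: Y_range_def\<close>)
  qed
  show "mY (S1 \<inter> S2) \<le> ?\<eta> * mY ?UU"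
    if S: "S1 \<in> S_eps XX \<epsilon> ` C" "S2 \<in> S_eps XX \<epsilon> ` C" "S1 \<noteq> S2" for S1 S2
  proof -
    obtain x1 x2 where x: "x1 \<in> C" "x2 \<in> C" "S1 = S_eps XX \<epsilon> x1" "S2 = S_eps XX \<epsilon> x2"
      using S(1,2) by blast
    with S(3) have "x1 \<noteq> x2" by blast
    with x have "mY (S1 \<inter> S2) \<le> \<delta> / card C"
      using dist unfolding distinguishable_def e_eps_def mYX by auto
    then show ?thesis using Y_range_pos[OF uf C \<open>0 \<le> \<epsilon>\<close>] by simp
  qed
qed

lemma distinguishable_inj_on_S_eps:
  fixes XX :: "'a::real_normed_vector set"
  assumes mYX: "mY XX = 1" and C: "codebook XX C" and dist: "distinguishable XX mY \<epsilon> \<delta> C"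
    and heavy: "\<forall>x\<in>C. \<delta> < mY (S_eps XX \<epsilon> x)" and "0 \<le> \<delta>"
  shows "inj_on (S_eps XX \<epsilon>) C"
proof (rule inj_onI, rule ccontr)
  fix x1 x2 assume x: "x1 \<in> C" "x2 \<in> C" "S_eps XX \<epsilon> x1 = S_eps XX \<epsilon> x2" "x1 \<noteq> x2"
  have "card C \<ge> 1" using C unfolding codebook_def by (auto simp: Suc_le_eq card_gt_0_iff)
  have "mY (S_eps XX \<epsilon> x1) = e_eps XX mY \<epsilon> x1 x2" unfolding e_eps_def mYX using x by simp
  also have "\<dots> \<le> \<delta> / card C" using dist x unfolding distinguishable_def by blast
  also have "\<dots> \<le> \<delta>"
    using \<open>card C \<ge> 1\<close> \<open>0 \<le> \<delta>\<close> by (simp add: divide_le_eq mult_le_cancel_left1)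
  also have "\<dots> < mY (S_eps XX \<epsilon> x1)" using heavy x by blast
  finally show False by simp
qed

lemma overlap_family_card_eq:
  assumes "overlap_family m UU WW cond \<delta> F" "overlap_family m UU WW cond \<delta> F'"
  shows "card F = card F'"
  using assms unfolding overlap_family_def by (meson le_antisym)

lemma I_delta_eq_log_card:
  assumes "overlap_family m UU WW cond \<delta> F"
  shows "I_delta m UU WW cond \<delta> = log 2 (card F)"
proof -
  have "overlap_family m UU WW cond \<delta> (SOME F. overlap_family m UU WW cond \<delta> F)"
    using assms by (rule someI)
  with assms show ?thesis
    unfolding I_delta_def using overlap_family_card_eq by (metis (no_types, lifting))
qed

lemma I_delta_distinguishable:
  fixes XX :: "'a::real_normed_vector set"
  assumes uf: "uncertainty_function XX mY" and mYX: "mY XX = 1" and "0 \<le> \<epsilon>"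
    and heavy: "\<forall>x\<in>C. \<delta> < mY (S_eps XX \<epsilon> x)" and "0 \<le> \<delta>"
    and C: "codebook XX C" and dist: "distinguishable XX mY \<epsilon> \<delta> C"
  shows "I_delta mY (Y_range XX \<epsilon> C) C (Y_cond XX \<epsilon> C) (\<delta> / mY (Y_range XX \<epsilon> C) / card C)
           = log 2 (card C)"
proof -
  let ?\<eta> = "\<delta> / mY (Y_range XX \<epsilon> C) / card C"
  have adm: "admissible_family mY (Y_range XX \<epsilon> C) C (Y_cond XX \<epsilon> C) ?\<eta> (S_eps XX \<epsilon> ` C)"
    using distinguishable_balls_admissible[OF uf mYX \<open>0 \<le> \<epsilon>\<close> C dist] .
  have card_balls: "card (S_eps XX \<epsilon> ` C) = card C"
    using distinguishable_inj_on_S_eps[OF mYX C dist heavy \<open>0 \<le> \<delta>\<close>] by (rule card_image)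
  have "?\<eta> * mY (Y_range XX \<epsilon> C) = \<delta> / card C"
    using Y_range_pos[OF uf C \<open>0 \<le> \<epsilon>\<close>] by simp
  then have "finite G \<and> card G \<le> card C"
    if "admissible_family mY (Y_range XX \<epsilon> C) C (Y_cond XX \<epsilon> C) ?\<eta> G" for G
    using admissible_family_codebook[OF uf mYX \<open>0 \<le> \<epsilon>\<close> C heavy \<open>0 \<le> \<delta>\<close> that] by simp
  with adm card_balls C
  have "overlap_family mY (Y_range XX \<epsilon> C) C (Y_cond XX \<epsilon> C) ?\<eta> (S_eps XX \<epsilon> ` C)"
    unfolding overlap_family_def codebook_def by auto
  then show ?thesis using I_delta_eq_log_card card_balls by metis
qed

lemma I_delta_le_distinguishable:
  fixes XX :: "'a::real_normed_vector set"
  assumes uf: "uncertainty_function XX mY" and mYX: "mY XX = 1" and "0 \<le> \<epsilon>"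
    and heavy: "\<forall>x\<in>C. \<delta> < mY (S_eps XX \<epsilon> x)" and "0 \<le> \<delta>"
    and C: "codebook XX C" and \<delta>': "\<delta>' \<le> \<delta> / mY (Y_range XX \<epsilon> C)"
  shows "\<exists>C'. codebook XX C' \<and> distinguishable XX mY \<epsilon> \<delta> C' \<and>
           I_delta mY (Y_range XX \<epsilon> C) C (Y_cond XX \<epsilon> C) (\<delta>' / card C) \<le> log 2 (card C')"
proof (cases "\<exists>F. overlap_family mY (Y_range XX \<epsilon> C) C (Y_cond XX \<epsilon> C) (\<delta>' / card C) F")
  case True
  then obtain F where F: "overlap_family mY (Y_range XX \<epsilon> C) C (Y_cond XX \<epsilon> C) (\<delta>' / card C) F"
    by blast
  have "\<delta>' * mY (Y_range XX \<epsilon> C) \<le> \<delta>"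
    using \<delta>' Y_range_pos[OF uf C \<open>0 \<le> \<epsilon>\<close>] by (simp add: pos_le_divide_eq)
  then have "\<delta>' / card C * mY (Y_range XX \<epsilon> C) \<le> \<delta> / card C"
    by (simp add: divide_right_mono)
  then obtain C' where "codebook XX C'" "distinguishable XX mY \<epsilon> \<delta> C'" "card C' = card F"
    using admissible_family_codebook[OF uf mYX \<open>0 \<le> \<epsilon>\<close> C heavy \<open>0 \<le> \<delta>\<close>] F
    unfolding overlap_family_def by blast
  then show ?thesis using I_delta_eq_log_card[OF F] by auto
next
  case False
  obtain x where "x \<in> C" using C unfolding codebook_def by blast
  then have "codebook XX {x}" "distinguishable XX mY \<epsilon> \<delta> {x}"
    using C unfolding codebook_def distinguishable_def by auto
  moreover have "I_delta mY (Y_range XX \<epsilon> C) C (Y_cond XX \<epsilon> C) (\<delta>' / card C) = 0"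
    using False by (simp add: I_delta_def)
  ultimately show ?thesis by (intro exI[of _ "{x}"]) simp
qed

theorem theorem5:
  fixes XX :: "'a::real_normed_vector set"
    and mX mY :: "'a set \<Rightarrow> real"
    and \<epsilon> \<delta> :: real
    and xstar :: 'a
  assumes "Met_TC.mtotally_bounded XX"
    and "\<forall>x\<in>XX. norm x \<le> 1"
    and "uncertainty_function XX mX"
    and uf: "uncertainty_function XX mY"
    and mYX: "mY XX = 1"
    and "0 < \<epsilon>" and "\<epsilon> \<le> 1"
    and "xstar \<in> XX"
    and xstar_min: "\<forall>x\<in>XX. mY (S_eps XX \<epsilon> xstar) \<le> mY (S_eps XX \<epsilon> x)"
    and "0 \<le> \<delta>" and "\<delta> < mY (S_eps XX \<epsilon> xstar)"
  shows "capacity XX mY \<epsilon> \<delta> =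
    Sup {ereal (I_delta mY (Y_range XX \<epsilon> C) C (Y_cond XX \<epsilon> C) (\<delta>' / real (card C))) | C \<delta>'.
           codebook XX C \<and> 0 \<le> \<delta>' \<and> \<delta>' \<le> \<delta> / mY (Y_range XX \<epsilon> C)}"
    (is "_ = Sup ?I")
proof -
  let ?K = "{ereal (log 2 (real (card C))) | C. codebook XX C \<and> distinguishable XX mY \<epsilon> \<delta> C}"
  have "0 \<le> \<epsilon>" using \<open>0 < \<epsilon>\<close> by simp
  have heavy: "\<forall>x\<in>C. \<delta> < mY (S_eps XX \<epsilon> x)" if "codebook XX C" for C
    using that xstar_min \<open>\<delta> < mY (S_eps XX \<epsilon> xstar)\<close> unfolding codebook_def by fastforce
  have "Sup ?K \<le> Sup ?I"
  proof (rule Sup_subset_mono, rule subsetI)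
    fix k assume "k \<in> ?K"
    then obtain C where C: "k = ereal (log 2 (card C))" "codebook XX C"
      "distinguishable XX mY \<epsilon> \<delta> C" by blast
    have "0 \<le> \<delta> / mY (Y_range XX \<epsilon> C)"
      using \<open>0 \<le> \<delta>\<close> Y_range_pos[OF uf C(2) \<open>0 \<le> \<epsilon>\<close>] by simp
    moreover have "k = ereal (I_delta mY (Y_range XX \<epsilon> C) C (Y_cond XX \<epsilon> C)
                     (\<delta> / mY (Y_range XX \<epsilon> C) / card C))"
      using C I_delta_distinguishable[OF uf mYX \<open>0 \<le> \<epsilon>\<close> heavy \<open>0 \<le> \<delta>\<close>] by simp
    ultimately show "k \<in> ?I" using C(2) by blast
  qed
  moreover have "Sup ?I \<le> Sup ?K"
  proof (rule Sup_mono)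
    fix i assume "i \<in> ?I"
    then obtain C \<delta>' where C: "i = ereal (I_delta mY (Y_range XX \<epsilon> C) C (Y_cond XX \<epsilon> C) (\<delta>' / card C))"
      "codebook XX C" "\<delta>' \<le> \<delta> / mY (Y_range XX \<epsilon> C)" by blast
    then obtain C' where "codebook XX C'" "distinguishable XX mY \<epsilon> \<delta> C'"
      "I_delta mY (Y_range XX \<epsilon> C) C (Y_cond XX \<epsilon> C) (\<delta>' / card C) \<le> log 2 (card C')"
      using I_delta_le_distinguishable[OF uf mYX \<open>0 \<le> \<epsilon>\<close> heavy \<open>0 \<le> \<delta>\<close>] by blast
    with C(1) show "\<exists>k\<in>?K. i \<le> k" by auto
  qed
  ultimately show ?thesis unfolding capacity_def by (rule antisym)
qed

end
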